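(* Let $f,g\in H^2_\tau(\mathcal S)$. Then $|f|=|g|$ on $\mathbb R$ if and only if there exist holomorphic functions $u,v$ on $\mathcal S$ such that $f=uv$ and $g=uv^*$.
   Context: $\mathcal S=\{z\in\mathbb C:|\mathrm{Im}\,z|<1\}$; $H^2_\tau(\mathcal S)$ is the space of holomorphic $f$ on $\mathcal S$ with $\sup_{|y|<1}\int_{\mathbb R}|f(t+iy)|^2\,\mathrm dt<\infty$. For $v$ holomorphic on $\mathcal S$, $v^*(z)=\overline{v(\bar z)}$. *)

theory Defs
  imports "HOL-Analysis.Analysis"
begin

definition strip :: "complex set" where
  "strip = {z. \<bar>Im z\<bar> < 1}"

definition H2_strip :: "(complex \<Rightarrow> complex) set" where
  "H2_strip = {f. f holomorphic_on strip \<and>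
     (SUP y\<in>{-1<..<(1::real)}. \<integral>\<^sup>+ t. ennreal ((cmod (f (Complex t y)))\<^sup>2) \<partial>lborel) < \<infinity>}"

definition star_fun :: "(complex \<Rightarrow> complex) \<Rightarrow> complex \<Rightarrow> complex" where
  "star_fun v z = cnj (v (cnj z))"

end

(*
  On the real line |f|^2 = f f^* and |g|^2 = g g^*, so the identity theorem gives f f^* = g g^*
  on the whole strip.  Reflection moves a zero of order m at cnj z to a zero of order m at z,
  hence ord f z + ord f (cnj z) = ord g z + ord g (cnj z).  A Weierstrass product with centres
  on the boundary lines yields holomorphic u and v with ord u = min (ord f) (ord g) and
  ord v = ord f - ord u; the balance of orders makes the quotients f / uv and g / uv^* zero-free.
  Writing g = k u v^*, comparing moduli on the real line gives k k^* = 1.  For a holomorphic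
  square root s of k, s s^* is then a continuous square root of 1, hence constant, and it is 1
  since s(0) s^*(0) = |s(0)|^2 > 0.  So f = (u s) (v / s) and g = (u s) (v / s)^*.
*)
theory Submission imports Defs "HOL-Complex_Analysis.Complex_Analysis"
begin

section \<open>Weierstrass products on an open set\<close>

locale open_weierstrass_product =
  fixes A :: "complex set" and a b :: "nat \<Rightarrow> complex" and p :: "nat \<Rightarrow> nat"
  assumes open_A: "open A"
    and b_notin: "\<And>n. b n \<notin> A"
    and p_ge: "\<And>n. n \<le> p n"
    and eventually_small: "\<And>K. compact K \<Longrightarrow> K \<subseteq> A \<Longrightarrow>
       eventually (\<lambda>n. \<forall>z\<in>K. norm (a n / (z - b n)) \<le> 1/2) sequentially"
begin

definition factor :: "nat \<Rightarrow> complex \<Rightarrow> complex" where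
  "factor n z = weierstrass_factor (p n) (a n / (z - b n))"

definition W :: "complex \<Rightarrow> complex" where
  "W z = (\<Prod>n. factor n z)"

lemma sub_b_nonzero: "z \<in> A \<Longrightarrow> z - b n \<noteq> 0"
  using b_notin[of n] by auto

lemma factor_holomorphic: "factor n holomorphic_on A"
  unfolding factor_def using sub_b_nonzero by (auto intro!: holomorphic_intros)

lemma factor_analytic: "z \<in> A \<Longrightarrow> factor n analytic_on {z}"
  using factor_holomorphic open_A analytic_at by blast

lemma factor_eq_0_iff: "z \<in> A \<Longrightarrow> factor n z = 0 \<longleftrightarrow> z = b n + a n"
  using sub_b_nonzero[of z n] by (auto simp: factor_def field_simps)

lemma norm_factor_sub_1_le:
  assumes "norm (a n / (z - b n)) \<le> 1/2"
  shows "norm (factor n z - 1) \<le> 3 * (1/2) ^ Suc n"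
proof -
  have "norm (factor n z - 1) \<le> 3 * norm (a n / (z - b n)) ^ Suc (p n)"
    unfolding factor_def by (rule weierstrass_factor_bound[OF assms])
  also have "\<dots> \<le> 3 * (1/2) ^ Suc (p n)"
    by (intro mult_left_mono power_mono assms) auto
  also have "\<dots> \<le> 3 * (1/2) ^ Suc n"
    using p_ge[of n] by (intro mult_left_mono power_decreasing) auto
  finally show ?thesis .
qed

lemma eventually_norm_factor_sub_1_le:
  assumes "compact K" "K \<subseteq> A"
  shows "eventually (\<lambda>n. \<forall>z\<in>K. norm (norm (factor n z - 1)) \<le> 3 * (1/2) ^ Suc n) sequentially"
  using eventually_small[OF assms] by eventually_elim (use norm_factor_sub_1_le in auto)

lemma summable_geometric_bound: "summable (\<lambda>n. 3 * (1/2::real) ^ Suc n)"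
  by (intro summable_mult summable_Suc_iff[THEN iffD2] summable_geometric) auto

lemma abs_convergent: "z \<in> A \<Longrightarrow> abs_convergent_prod (\<lambda>n. factor n z)"
  unfolding abs_convergent_prod_conv_summable
  using eventually_norm_factor_sub_1_le[of "{z}"]
  by (intro summable_comparison_test_ev[OF _ summable_geometric_bound]) auto

lemma has_prod: "z \<in> A \<Longrightarrow> (\<lambda>n. factor n z) has_prod W z"
  unfolding W_def
  by (intro convergent_prod_has_prod abs_convergent_prod_imp_convergent_prod abs_convergent)

lemma uniform_limit:
  assumes "compact K" "K \<subseteq> A"
  shows "uniform_limit K (\<lambda>N z. \<Prod>n<N. factor n z) W sequentially"
proof -
  have "uniformly_convergent_on K (\<lambda>N z. \<Prod>n<N. factor n z)"
  proof (rule uniformly_convergent_on_prod')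
    show "uniformly_convergent_on K (\<lambda>N z. \<Sum>n<N. norm (factor n z - 1))"
      by (rule Weierstrass_m_test'_ev[OF eventually_norm_factor_sub_1_le[OF assms]
            summable_geometric_bound])
    show "continuous_on K (factor n)" for n
      using holomorphic_on_imp_continuous_on[OF factor_holomorphic] assms(2)
      by (rule continuous_on_subset)
  qed (rule assms(1))
  then obtain g where g: "uniform_limit K (\<lambda>N z. \<Prod>n<N. factor n z) g sequentially"
    by (auto simp: uniformly_convergent_on_def)
  also have "?this \<longleftrightarrow> uniform_limit K (\<lambda>N z. \<Prod>n<N. factor n z) W sequentially"
  proof (intro uniform_limit_cong)
    fix z assume z: "z \<in> K"
    have "(\<lambda>N. \<Prod>n<N. factor n z) \<longlonglongrightarrow> g z"
      using g z by (rule tendsto_uniform_limitI)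
    then have "(\<lambda>N. \<Prod>n<Suc N. factor n z) \<longlonglongrightarrow> g z"
      by (rule LIMSEQ_Suc)
    moreover have "(\<lambda>N. \<Prod>n<Suc N. factor n z) \<longlonglongrightarrow> W z"
      using convergent_prod_LIMSEQ[OF abs_convergent_prod_imp_convergent_prod[OF abs_convergent]]
        z assms(2) unfolding lessThan_Suc_atMost W_def by blast
    ultimately show "g z = W z"
      using tendsto_unique by force
  qed auto
  finally show ?thesis .
qed

lemma holomorphic: "W holomorphic_on A"
proof (rule holomorphic_uniform_sequence[OF open_A])
  show "(\<lambda>z. \<Prod>n<N. factor n z) holomorphic_on A" for N
    using factor_holomorphic by (intro holomorphic_intros)
  fix z assume "z \<in> A"
  then obtain d where "d > 0" "cball z d \<subseteq> A"
    using open_A open_contains_cball by blast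
  then show "\<exists>d>0. cball z d \<subseteq> A \<and>
      uniform_limit (cball z d) (\<lambda>N z. \<Prod>n<N. factor n z) W sequentially"
    using uniform_limit[of "cball z d"] by auto
qed

lemma zero: "z \<in> A \<Longrightarrow> W z = 0 \<longleftrightarrow> (\<exists>n. z = b n + a n)"
  using has_prod_eq_0_iff[OF has_prod, of z] factor_eq_0_iff[of z] by auto

lemma finite_occs:
  assumes "z \<in> A" shows "finite {n. z = b n + a n}"
proof -
  obtain N where N: "\<And>n. n \<ge> N \<Longrightarrow> norm (a n / (z - b n)) \<le> 1/2"
    using eventually_small[of "{z}"] assms by (auto simp: eventually_at_top_linorder)
  have "n < N" if "z = b n + a n" for n
  proof (rule ccontr)
    assume "\<not> n < N"
    moreover have "a n / (z - b n) = 1"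
      using that sub_b_nonzero[OF assms, of n] by (auto simp: field_simps)
    ultimately show False
      using N[of n] by simp
  qed
  then have "{n. z = b n + a n} \<subseteq> {..<N}"
    by blast
  then show ?thesis
    using finite_subset by blast
qed

lemma zorder_factor:
  assumes "z \<in> A" "z = b n + a n"
  shows "zorder (factor n) z = 1"
proof (rule zorder_eqI[OF open_A assms(1)])
  define E where "E w = exp (\<Sum>k=1..p n. (a n / (w - b n)) ^ k / of_nat k)" for w
  show "(\<lambda>w. E w / (w - b n)) holomorphic_on A"
    unfolding E_def using sub_b_nonzero by (auto intro!: holomorphic_intros)
  show "E z / (z - b n) \<noteq> 0"
    unfolding E_def using sub_b_nonzero[OF assms(1)] by auto
  fix w assume "w \<in> A" "w \<noteq> z"
  then have "1 - a n / (w - b n) = (w - z) / (w - b n)"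
    using sub_b_nonzero[of w n] assms(2) by (auto simp: field_simps)
  then show "factor n w = E w / (w - b n) * (w - z) powi 1"
    by (simp add: factor_def weierstrass_factor_def E_def)
qed

lemma W_eq_prod_tail:
  assumes "w \<in> A"
  shows "W w = (\<Prod>n<m. factor n w) * (\<Prod>n. factor (n + m) w)"
proof -
  have "(\<lambda>n. factor n w) has_prod ((\<Prod>n<m. factor n w) * (\<Prod>n. factor (n + m) w))"
    by (intro has_prod_ignore_initial_segment' abs_convergent_prod_imp_convergent_prod
        abs_convergent assms)
  then show ?thesis
    by (rule has_prod_unique2[OF has_prod[OF assms]])
qed

lemma shift: "open_weierstrass_product A (\<lambda>n. a (n + m)) (\<lambda>n. b (n + m)) (\<lambda>n. p (n + m))"
proof
  fix K assume "compact K" "K \<subseteq> A"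
  then show "eventually (\<lambda>n. \<forall>z\<in>K. norm (a (n + m) / (z - b (n + m))) \<le> 1/2) sequentially"
    using eventually_sequentially_seg[THEN iffD2, OF eventually_small] by blast
next
  show "n \<le> p (n + m)" for n
    using p_ge[of "n + m"] by linarith
qed (use open_A b_notin in auto)

lemma eventually_prod_factor_nonzero:
  assumes "z \<in> A" "Z \<subseteq> {n. z = b n + a n}"
  shows "eventually (\<lambda>w. (\<Prod>n\<in>Z. factor n w) \<noteq> 0) (at z)"
proof -
  have "eventually (\<lambda>w. w \<in> A - {z}) (at z)"
    using open_A assms(1) by (intro eventually_at_in_open) auto
  then show ?thesis
    by eventually_elim
      (use assms finite_subset[OF assms(2) finite_occs] in \<open>auto simp: factor_eq_0_iff\<close>)
qed

lemma zorder_prod_factor: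
  assumes "z \<in> A" "Z \<subseteq> {n. z = b n + a n}"
  shows "zorder (\<lambda>w. \<Prod>n\<in>Z. factor n w) z = card Z"
proof -
  have "zorder (\<lambda>w. \<Prod>n\<in>Z. factor n w) z = (\<Sum>n\<in>Z. zorder (factor n) z)"
    using assms by (intro zorder_prod_analytic factor_analytic eventually_prod_factor_nonzero)
  also have "\<dots> = (\<Sum>n\<in>Z. 1)"
    using assms by (intro sum.cong refl zorder_factor) auto
  finally show ?thesis
    by simp
qed

lemma zorder:
  assumes z: "z \<in> A"
  shows "zorder W z = card {n. z = b n + a n}"
proof -
  define Z where "Z = {n. z = b n + a n}"
  obtain N where N: "Z \<subseteq> {..N}"
    using finite_occs[OF z] unfolding Z_def by (meson finite_nat_iff_bounded_le)
  interpret tail: open_weierstrass_product A "\<lambda>n. a (n + Suc N)" "\<lambda>n. b (n + Suc N)"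
      "\<lambda>n. p (n + Suc N)"
    by (rule shift)
  have tail_W: "tail.W w = (\<Prod>n. factor (n + Suc N) w)" for w
    unfolding tail.W_def by (simp only: tail.factor_def factor_def)
  define h where "h w = (\<Prod>n\<in>{..N} - Z. factor n w) * tail.W w" for w
  have W_eq: "W w = h w * (\<Prod>n\<in>Z. factor n w)" if "w \<in> A" for w
  proof -
    have "W w = (\<Prod>n<Suc N. factor n w) * tail.W w"
      unfolding tail_W by (rule W_eq_prod_tail[OF that])
    also have "{..<Suc N} = ({..N} - Z) \<union> Z"
      using N by auto
    also have "(\<Prod>n\<in>\<dots>. factor n w) = (\<Prod>n\<in>{..N} - Z. factor n w) * (\<Prod>n\<in>Z. factor n w)"
      using N by (intro prod.union_disjoint) (auto intro: finite_subset)
    finally show ?thesis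
      by (simp add: h_def mult_ac)
  qed
  have h_analytic: "h analytic_on {z}"
    unfolding h_def using tail.holomorphic factor_holomorphic open_A z
    by (intro analytic_intros) (auto simp: analytic_at)
  have "h z \<noteq> 0"
    using N tail.zero[OF z] factor_eq_0_iff[OF z] by (auto simp: h_def Z_def)
  then have "eventually (\<lambda>w. h w \<noteq> 0) (at z)"
    using tendsto_imp_eventually_ne[OF isContD[OF analytic_at_imp_isCont[OF h_analytic]]] by blast
  moreover have "eventually (\<lambda>w. (\<Prod>n\<in>Z. factor n w) \<noteq> 0) (at z)"
    using eventually_prod_factor_nonzero[OF z] by (simp add: Z_def)
  ultimately have "zorder (\<lambda>w. h w * (\<Prod>n\<in>Z. factor n w)) z = zorder h z + card Z"
    using zorder_prod_factor[OF z] factor_analytic[OF z]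
    by (subst zorder_times_analytic) (auto intro!: h_analytic analytic_intros simp: Z_def
        elim: eventually_elim2)
  also have "zorder h z = 0"
    by (rule zorder_eq_0I[OF h_analytic \<open>h z \<noteq> 0\<close>])
  also have "zorder (\<lambda>w. h w * (\<Prod>n\<in>Z. factor n w)) z = zorder W z"
    using eventually_at_in_open'[OF open_A z] W_eq z
    by (intro zorder_cong) (auto elim: eventually_mono)
  finally show ?thesis
    by (simp add: Z_def)
qed

end

lemma holomorphic_eventually_nonzero:
  assumes "f holomorphic_on A" "open A" "connected A" "w0 \<in> A" "f w0 \<noteq> 0" "z \<in> A"
  shows "eventually (\<lambda>w. f w \<noteq> 0) (at z)"
  using non_zero_neighbour_alt[OF assms(1-3,6,4,5)] by (rule eventually_mono) auto

lemma holomorphic_frequently_nonzero: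
  assumes "f holomorphic_on A" "open A" "connected A" "w0 \<in> A" "f w0 \<noteq> 0" "z \<in> A"
  shows "frequently (\<lambda>w. f w \<noteq> 0) (at z)"
  using holomorphic_eventually_nonzero[OF assms] by (rule eventually_frequently[rotated]) simp

lemma holomorphic_mult_nonzero_somewhere:
  assumes "u holomorphic_on A" "v holomorphic_on A" "open A" "connected A"
    and "w0 \<in> A" "u w0 \<noteq> 0" "w1 \<in> A" "v w1 \<noteq> 0"
  obtains w where "w \<in> A" "u w * v w \<noteq> 0"
proof -
  have "eventually (\<lambda>w. (u w \<noteq> 0 \<and> w \<in> A) \<and> v w \<noteq> 0 \<and> w \<in> A) (at w0)"
    using non_zero_neighbour_alt[OF assms(1,3,4,5,5,6)] non_zero_neighbour_alt[OF assms(2-5,7,8)]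
    by (rule eventually_conj)
  then obtain w where "(u w \<noteq> 0 \<and> w \<in> A) \<and> v w \<noteq> 0 \<and> w \<in> A"
    using eventually_happens'[OF at_neq_bot] by blast
  then show ?thesis
    using that by auto
qed

lemma holomorphic_finite_zeros_compact:
  assumes "f holomorphic_on A" "open A" "connected A" "w0 \<in> A" "f w0 \<noteq> 0"
    and "compact K" "K \<subseteq> A"
  shows "finite {z\<in>K. f z = 0}"
proof (cases "f constant_on A")
  case True
  then have "{z\<in>K. f z = 0} = {}"
    using assms(4,5,7) by (auto simp: constant_on_def)
  then show ?thesis
    by (metis finite.emptyI)
qed (rule holomorphic_compact_finite_zeros[OF assms(1-3,6,7)])

lemma zorder_mult_holomorphic:
  assumes "u holomorphic_on A" "v holomorphic_on A" "open A" "connected A"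
    and "w0 \<in> A" "u w0 \<noteq> 0" "w1 \<in> A" "v w1 \<noteq> 0" "z \<in> A"
  shows "zorder (\<lambda>w. u w * v w) z = zorder u z + zorder v z"
proof (rule zorder_times_analytic)
  show "u analytic_on {z}" "v analytic_on {z}"
    using assms analytic_at by blast+
  show "eventually (\<lambda>w. u w * v w \<noteq> 0) (at z)"
    using holomorphic_eventually_nonzero[of u A w0 z] holomorphic_eventually_nonzero[of v A w1 z] assms
    by (auto elim: eventually_elim2)
qed

lemma zorder_eq_imp_nonzero_factor:
  assumes "f holomorphic_on A" "g holomorphic_on A" "open A" "connected A"
    and "w0 \<in> A" "f w0 \<noteq> 0" "w1 \<in> A" "g w1 \<noteq> 0"
    and "\<And>z. z \<in> A \<Longrightarrow> zorder f z = zorder g z"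
  obtains h where "h holomorphic_on A" "\<And>z. z \<in> A \<Longrightarrow> h z \<noteq> 0"
    "\<And>z. z \<in> A \<Longrightarrow> g z = h z * f z"
proof -
  have "f z = 0 \<longleftrightarrow> g z = 0" if "z \<in> A" for z
    using zorder_pos_iff[OF assms(1,3) that holomorphic_frequently_nonzero[OF assms(1,3-6) that]]
      zorder_pos_iff[OF assms(2,3) that holomorphic_frequently_nonzero[OF assms(2-4,7,8) that]]
      assms(9)[OF that] by simp
  from holomorphic_zorder_factorization[OF assms(2-4,1) this assms(9)] that show ?thesis
    by blast
qed

section \<open>Reflection in the real axis\<close>

lemma star_fun_of_real [simp]: "star_fun v (complex_of_real t) = cnj (v (complex_of_real t))"
  by (simp add: star_fun_def)

lemma star_fun_cnj [simp]: "star_fun v (cnj z) = cnj (v z)"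
  by (simp add: star_fun_def)

lemma holomorphic_on_star_fun:
  assumes "v holomorphic_on cnj ` A" "open A"
  shows "star_fun v holomorphic_on A"
proof -
  have "star_fun v = cnj \<circ> v \<circ> cnj"
    by (auto simp: star_fun_def)
  then show ?thesis
    using holomorphic_on_compose_cnj_cnj[OF assms] by simp
qed

lemma zorder_star_fun:
  assumes "f analytic_on {cnj z}" "frequently (\<lambda>w. f w \<noteq> 0) (at (cnj z))"
  shows "zorder (star_fun f) z = zorder f (cnj z)"
proof -
  obtain r where r: "r > 0" "zor_poly f (cnj z) holomorphic_on cball (cnj z) r"
      "\<And>w. w \<in> cball (cnj z) r - {cnj z} \<Longrightarrow>
         f w = zor_poly f (cnj z) w * (w - cnj z) powi zorder f (cnj z)"
    and nonzero: "zor_poly f (cnj z) (cnj z) \<noteq> 0"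
    using zorder_exist[OF isolated_singularity_at_analytic not_essential_analytic] assms by blast
  define g where "g = cnj \<circ> zor_poly f (cnj z) \<circ> cnj"
  have dist_cnj: "dist (cnj a) (cnj b) = dist a b" for a b
    by (metis complex_cnj_diff complex_mod_cnj dist_norm)
  then have cnj_ball: "cnj ` ball z r \<subseteq> cball (cnj z) r"
    by auto
  show ?thesis
  proof (rule zorder_eqI[of "ball z r" z g])
    show "g holomorphic_on ball z r"
      unfolding g_def using r(2) cnj_ball
      by (intro holomorphic_on_compose_cnj_cnj holomorphic_on_subset[OF r(2)]) auto
    show "g z \<noteq> 0"
      using nonzero by (simp add: g_def)
    fix w assume "w \<in> ball z r" "w \<noteq> z"
    then have "cnj w \<in> cball (cnj z) r - {cnj z}"
      using dist_cnj[of z w] by auto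
    from r(3)[OF this] show "star_fun f w = g w * (w - z) powi zorder f (cnj z)"
      by (simp add: star_fun_def g_def)
  qed (use r(1) in auto)
qed

definition divisor_points :: "'a set \<Rightarrow> ('a \<Rightarrow> nat) \<Rightarrow> ('a \<times> nat) set" where
  "divisor_points A V = {(z, k). z \<in> A \<and> k < V z}"

lemma finite_divisor_points:
  assumes "finite {z\<in>A. 0 < V z}"
  shows "finite (divisor_points A V)"
proof -
  have "divisor_points A V \<subseteq> (\<Union>z\<in>{z\<in>A. 0 < V z}. {z} \<times> {..<V z})"
    by (auto simp: divisor_points_def)
  then show ?thesis
    by (rule finite_subset) (use assms in auto)
qed

lemma card_divisor_points_singleton: "card (divisor_points {z} V) = V z"
proof -
  have "divisor_points {z} V = Pair z ` {..<V z}"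
    by (auto simp: divisor_points_def)
  then show ?thesis
    by (simp add: card_image inj_on_def)
qed

lemma countable_padded_enumeration:
  assumes "countable P"
  obtains e :: "nat \<Rightarrow> 'a + nat" where "inj e" "range e = Inl ` P \<union> range Inr"
proof -
  have "countable (Inl ` P \<union> range Inr :: ('a + nat) set)"
    using assms by simp
  moreover have "infinite (Inl ` P \<union> range Inr :: ('a + nat) set)"
    using range_inj_infinite[of "Inr :: nat \<Rightarrow> 'a + nat"] by simp
  ultimately obtain e :: "nat \<Rightarrow> 'a + nat" where "bij_betw e UNIV (Inl ` P \<union> range Inr)"
    by (rule countable_infiniteE')
  then show ?thesis
    unfolding bij_betw_def by (blast intro: that)
qed

lemma open_strip: "open strip"
  unfolding strip_def by (intro open_Collect_less continuous_intros)

lemma convex_strip: "convex strip"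
proof -
  have "strip = {z. Im z < 1} \<inter> {z. Im z > -1}"
    by (auto simp: strip_def)
  then show ?thesis
    using convex_halfspace_Im_lt convex_halfspace_Im_gt convex_Int by metis
qed

lemma connected_strip: "connected strip"
  by (rule convex_connected[OF convex_strip])

lemma zero_in_strip: "0 \<in> strip"
  by (simp add: strip_def)

lemma of_real_in_strip [simp]: "complex_of_real t \<in> strip"
  by (simp add: strip_def)

lemma cnj_in_strip_iff [simp]: "cnj z \<in> strip \<longleftrightarrow> z \<in> strip"
  by (simp add: strip_def)

lemma cnj_image_strip [simp]: "cnj ` strip = strip"
  by (simp add: image_cnj_conv_vimage_cnj strip_def)

lemma holomorphic_on_star_fun_strip: "v holomorphic_on strip \<Longrightarrow> star_fun v holomorphic_on strip"
  by (intro holomorphic_on_star_fun open_strip) simp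

lemma holomorphic_strip_eq_0_of_real:
  assumes "h holomorphic_on strip" "\<And>t. h (complex_of_real t) = 0" "z \<in> strip"
  shows "h z = 0"
proof (rule analytic_continuation[OF assms(1) open_strip connected_strip])
  show "(0::complex) islimpt range complex_of_real"
    unfolding islimpt_approachable
  proof (intro allI impI)
    fix e :: real assume "e > 0"
    then show "\<exists>x'\<in>range complex_of_real. x' \<noteq> 0 \<and> dist x' 0 < e"
      by (intro bexI[of _ "complex_of_real (e/2)"] rangeI) auto
  qed
qed (use assms zero_in_strip in auto)

definition strip_rect :: "real \<Rightarrow> complex set" where
  "strip_rect r = {z. \<bar>Re z\<bar> \<le> r \<and> \<bar>Im z\<bar> \<le> 1 - 1/r}"

lemma strip_rect_subset_strip: "r \<ge> 1 \<Longrightarrow> strip_rect r \<subseteq> strip"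
  unfolding strip_rect_def strip_def
  by (smt (verit, best) divide_pos_pos mem_Collect_eq subsetI)

lemma strip_rect_mono: "0 < r \<Longrightarrow> r \<le> r' \<Longrightarrow> strip_rect r \<subseteq> strip_rect r'"
  unfolding strip_rect_def using frac_le[of 1 1 r r'] by auto

lemma compact_strip_rect: "compact (strip_rect r)"
  unfolding compact_eq_bounded_closed
proof
  have "norm z \<le> r + \<bar>1 - 1/r\<bar>" if "z \<in> strip_rect r" for z
    using that cmod_le[of z] by (auto simp: strip_rect_def)
  then show "bounded (strip_rect r)"
    unfolding bounded_iff by blast
  show "closed (strip_rect r)"
    unfolding strip_rect_def by (intro closed_Collect_conj closed_Collect_le continuous_intros)
qed

lemma compact_subset_strip_rect:
  assumes "compact K" "K \<subseteq> strip"
  obtains r where "r \<ge> 1" "K \<subseteq> strip_rect r"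
proof (cases "K = {}")
  case False
  have "continuous_on K (\<lambda>z. \<bar>Im z\<bar>)"
    by (intro continuous_intros)
  then obtain w where w: "w \<in> K" "\<And>y. y \<in> K \<Longrightarrow> \<bar>Im y\<bar> \<le> \<bar>Im w\<bar>"
    using continuous_attains_sup[OF assms(1) False] by blast
  have w_strip: "\<bar>Im w\<bar> < 1"
    using w(1) assms(2) by (auto simp: strip_def)
  obtain B where B: "\<And>y. y \<in> K \<Longrightarrow> norm y \<le> B"
    using compact_imp_bounded[OF assms(1)] unfolding bounded_iff by blast
  define r where "r = max 1 (max B (1 / (1 - \<bar>Im w\<bar>)))"
  have "1/r \<le> 1 / (1 / (1 - \<bar>Im w\<bar>))"
    using w_strip by (intro divide_left_mono) (auto simp: r_def)
  then have "1/r \<le> 1 - \<bar>Im w\<bar>"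
    by simp
  have "K \<subseteq> strip_rect r"
  proof
    fix y assume y: "y \<in> K"
    have "\<bar>Re y\<bar> \<le> r"
      using B[OF y] abs_Re_le_cmod[of y] by (simp add: r_def)
    moreover have "\<bar>Im y\<bar> \<le> 1 - 1/r"
      using w(2)[OF y] \<open>1/r \<le> 1 - \<bar>Im w\<bar>\<close> by linarith
    ultimately show "y \<in> strip_rect r"
      by (simp add: strip_rect_def)
  qed
  then show ?thesis
    using that[of r] by (simp add: r_def)
qed (use that[of 1] in auto)

(* The centre b = strip_boundary_proj a of the Weierstrass factor for a zero at a: since
   |a - b| = 1 - |Im a|, the ratio (a - b) / (z - b) is small on compact subsets of the strip
   both for zeros near the boundary and for zeros far out along the strip. *)
definition strip_boundary_proj :: "complex \<Rightarrow> complex" where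
  "strip_boundary_proj a = Complex (Re a) (if Im a \<ge> 0 then 1 else -1)"

lemma strip_boundary_proj_notin_strip: "strip_boundary_proj a \<notin> strip"
  by (simp add: strip_boundary_proj_def strip_def)

lemma norm_sub_strip_boundary_proj:
  assumes "\<bar>Im a\<bar> \<le> 1"
  shows "norm (a - strip_boundary_proj a) = 1 - \<bar>Im a\<bar>"
proof -
  have "a - strip_boundary_proj a = Complex 0 (Im a - (if Im a \<ge> 0 then 1 else -1))"
    by (simp add: strip_boundary_proj_def complex_eq_iff)
  then show ?thesis
    using assms by (auto simp: cmod_def)
qed

lemma norm_ratio_strip_boundary_proj_le:
  assumes r: "r \<ge> 1" and z: "z \<in> strip_rect r"
    and a: "\<bar>Im a\<bar> \<le> 1" "a \<notin> strip_rect (2*r + 2)"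
  shows "norm ((a - strip_boundary_proj a) / (z - strip_boundary_proj a)) \<le> 1/2"
proof -
  let ?d = "norm (z - strip_boundary_proj a)"
  have "\<bar>Im z\<bar> \<le> 1 - 1/r" "\<bar>Re z\<bar> \<le> r"
    using z by (auto simp: strip_rect_def)
  moreover have "\<bar>Im (z - strip_boundary_proj a)\<bar> \<ge> 1 - \<bar>Im z\<bar>"
    "Re (z - strip_boundary_proj a) = Re z - Re a"
    by (auto simp: strip_boundary_proj_def)
  ultimately have d_Im: "?d \<ge> 1/r" and d_Re: "?d \<ge> \<bar>Re a\<bar> - r"
    using abs_Im_le_cmod abs_Re_le_cmod by (smt (verit))+
  have "norm (a - strip_boundary_proj a) \<le> ?d / 2"
  proof (cases "\<bar>Im a\<bar> > 1 - 1/(2*r + 2)")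
    case True
    then have "norm (a - strip_boundary_proj a) < 1/(2*r + 2)"
      using norm_sub_strip_boundary_proj[OF a(1)] by simp
    also have "\<dots> \<le> 1/r / 2"
      using r by (simp add: field_simps)
    finally show ?thesis
      using d_Im by simp
  next
    case False
    then have "\<bar>Re a\<bar> > 2*r + 2"
      using a(2) by (auto simp: strip_rect_def)
    then show ?thesis
      using d_Re norm_sub_strip_boundary_proj[OF a(1)] r abs_ge_zero[of "Im a"] by linarith
  qed
  moreover have "?d > 0"
    using d_Im r by (smt (verit) divide_pos_pos)
  ultimately show ?thesis
    by (simp add: norm_divide divide_le_eq)
qed

section \<open>Prescribed zeros in the strip\<close>

lemma countable_divisor_points_strip:
  assumes "\<And>K. compact K \<Longrightarrow> K \<subseteq> strip \<Longrightarrow> finite {z\<in>K. 0 < V z}"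
  shows "countable (divisor_points strip V)"
proof -
  have rect: "\<exists>n. z \<in> strip_rect (real n + 1)" if z: "z \<in> strip" for z
  proof -
    obtain r where r: "r \<ge> 1" "{z} \<subseteq> strip_rect r"
      by (rule compact_subset_strip_rect[OF compact_sing]) (use z in auto)
    have "strip_rect r \<subseteq> strip_rect (real (nat \<lceil>r\<rceil>) + 1)"
      using r(1) by (intro strip_rect_mono) linarith+
    with r(2) show ?thesis
      by blast
  qed
  have "divisor_points strip V \<subseteq> (\<Union>n. divisor_points (strip_rect (real n + 1)) V)"
  proof
    fix x assume "x \<in> divisor_points strip V"
    then obtain z k where x: "x = (z, k)" "z \<in> strip" "k < V z"
      by (auto simp: divisor_points_def)
    then obtain n where "z \<in> strip_rect (real n + 1)"
      using rect by blast
    with x show "x \<in> (\<Union>n. divisor_points (strip_rect (real n + 1)) V)"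
      by (auto simp: divisor_points_def)
  qed
  moreover have "countable (\<Union>n. divisor_points (strip_rect (real n + 1)) V)"
    using assms[OF compact_strip_rect strip_rect_subset_strip]
    by (intro countable_UN[OF countableI_type] countable_finite finite_divisor_points) auto
  ultimately show ?thesis
    by (rule countable_subset)
qed

lemma open_weierstrass_product_strip:
  fixes pt :: "nat \<Rightarrow> complex"
  assumes closed_strip: "\<And>n. \<bar>Im (pt n)\<bar> \<le> 1"
    and finite_visits: "\<And>r. r \<ge> 1 \<Longrightarrow> finite {n. pt n \<in> strip_rect r}"
  shows "open_weierstrass_product strip (\<lambda>n. pt n - strip_boundary_proj (pt n))
           (\<lambda>n. strip_boundary_proj (pt n)) id"
proof
  fix K assume K: "compact K" "K \<subseteq> strip"
  obtain r where r: "r \<ge> 1" "K \<subseteq> strip_rect r"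
    by (rule compact_subset_strip_rect[OF K])
  obtain N where "{n. pt n \<in> strip_rect (2*r + 2)} \<subseteq> {..<N}"
    using finite_visits[of "2*r + 2"] r(1) finite_nat_iff_bounded by force
  then have N: "n < N" if "pt n \<in> strip_rect (2*r + 2)" for n
    using that by auto
  show "eventually (\<lambda>n. \<forall>z\<in>K. norm ((pt n - strip_boundary_proj (pt n)) /
                      (z - strip_boundary_proj (pt n))) \<le> 1/2) sequentially"
    unfolding eventually_at_top_linorder
  proof (intro exI allI impI ballI)
    fix n z assume "N \<le> n" "z \<in> K"
    then show "norm ((pt n - strip_boundary_proj (pt n)) / (z - strip_boundary_proj (pt n))) \<le> 1/2"
      using N[of n] r by (intro norm_ratio_strip_boundary_proj_le closed_strip) auto
  qed
qed (simp_all add: open_strip strip_boundary_proj_notin_strip)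

lemma strip_divisor_enumeration:
  assumes locally_finite: "\<And>K. compact K \<Longrightarrow> K \<subseteq> strip \<Longrightarrow> finite {z\<in>K. 0 < V z}"
  obtains pt :: "nat \<Rightarrow> complex" where "\<And>n. \<bar>Im (pt n)\<bar> \<le> 1"
    "\<And>r. r \<ge> 1 \<Longrightarrow> finite {n. pt n \<in> strip_rect r}"
    "\<And>z. z \<in> strip \<Longrightarrow> card {n. pt n = z} = V z"
proof -
  obtain e :: "nat \<Rightarrow> (complex \<times> nat) + nat"
    where e: "inj e" "range e = Inl ` divisor_points strip V \<union> range Inr"
    using countable_padded_enumeration[OF countable_divisor_points_strip[OF locally_finite]] .
  \<comment> \<open>padding points sit at \<open>\<i>\<close> on the boundary, where their Weierstrass factor is 1\<close>
  define pt where "pt n = (case e n of Inl (z, _) \<Rightarrow> z | Inr _ \<Rightarrow> \<i>)" for n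
  have e_Inl: "z \<in> strip \<and> k < V z" if "e n = Inl (z, k)" for n z k
  proof -
    have "Inl (z, k) \<in> range e"
      unfolding that[symmetric] by (rule rangeI)
    then show ?thesis
      unfolding e(2) by (auto simp: divisor_points_def)
  qed
  have visits: "{n. pt n \<in> S} = e -` Inl ` divisor_points S V" if "S \<subseteq> strip" for S
  proof (intro set_eqI iffI)
    fix n assume "n \<in> {n. pt n \<in> S}"
    with that show "n \<in> e -` Inl ` divisor_points S V"
      using e_Inl by (cases "e n") (auto simp: pt_def divisor_points_def strip_def)
  qed (use e_Inl in \<open>auto simp: pt_def divisor_points_def\<close>)
  have card_visits: "card {n. pt n \<in> S} = card (divisor_points S V)" if "S \<subseteq> strip" for S
  proof -
    have "Inl ` divisor_points S V \<subseteq> range e"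
      using that e(2) by (auto simp: divisor_points_def)
    then show ?thesis
      unfolding visits[OF that] by (simp add: card_vimage_inj[OF e(1)] card_image)
  qed
  show ?thesis
  proof (rule that)
    show "\<bar>Im (pt n)\<bar> \<le> 1" for n
      by (cases "e n") (auto simp: pt_def strip_def dest: e_Inl)
    show "finite {n. pt n \<in> strip_rect r}" if "r \<ge> 1" for r
      unfolding visits[OF strip_rect_subset_strip[OF that]]
      using locally_finite[OF compact_strip_rect strip_rect_subset_strip[OF that]]
      by (intro finite_vimageI[OF _ e(1)] finite_imageI finite_divisor_points)
    show "card {n. pt n = z} = V z" if "z \<in> strip" for z
      using card_visits[of "{z}"] that by (simp add: card_divisor_points_singleton)
  qed
qed

theorem strip_prescribed_zeros:
  fixes V :: "complex \<Rightarrow> nat"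
  assumes "\<And>K. compact K \<Longrightarrow> K \<subseteq> strip \<Longrightarrow> finite {z\<in>K. 0 < V z}"
  obtains w where "w holomorphic_on strip" "\<And>z. z \<in> strip \<Longrightarrow> zorder w z = V z"
    "\<And>z. z \<in> strip \<Longrightarrow> w z = 0 \<longleftrightarrow> 0 < V z"
proof -
  obtain pt :: "nat \<Rightarrow> complex" where pt: "\<And>n. \<bar>Im (pt n)\<bar> \<le> 1"
    "\<And>r. r \<ge> 1 \<Longrightarrow> finite {n. pt n \<in> strip_rect r}"
    "\<And>z. z \<in> strip \<Longrightarrow> card {n. pt n = z} = V z"
    using strip_divisor_enumeration[OF assms] by blast
  interpret W: open_weierstrass_product strip "\<lambda>n. pt n - strip_boundary_proj (pt n)"
      "\<lambda>n. strip_boundary_proj (pt n)" id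
    using pt(1,2) by (rule open_weierstrass_product_strip)
  show ?thesis
  proof (rule that[of W.W])
    fix z assume z: "z \<in> strip"
    have occs: "{n. z = strip_boundary_proj (pt n) + (pt n - strip_boundary_proj (pt n))} =
        {n. pt n = z}"
      by auto
    show "zorder W.W z = V z"
      using W.zorder[OF z] unfolding occs pt(3)[OF z] .
    have "W.W z = 0 \<longleftrightarrow> {n. pt n = z} \<noteq> {}"
      using W.zero[OF z] by auto
    also have "\<dots> \<longleftrightarrow> 0 < card {n. pt n = z}"
      using W.finite_occs[OF z] unfolding occs by (simp add: card_gt_0_iff)
    finally show "W.W z = 0 \<longleftrightarrow> 0 < V z"
      using pt(3)[OF z] by simp
  qed (rule W.holomorphic)
qed

section \<open>Functions with equal moduli on the real line\<close>

lemma mult_star_fun_eq_of_norm_eq: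
  assumes "f holomorphic_on strip" "g holomorphic_on strip"
    and "\<And>t. cmod (f (complex_of_real t)) = cmod (g (complex_of_real t))" "z \<in> strip"
  shows "f z * star_fun f z = g z * star_fun g z"
proof -
  have "f z * star_fun f z - g z * star_fun g z = 0"
  proof (rule holomorphic_strip_eq_0_of_real[OF _ _ assms(4)])
    show "(\<lambda>z. f z * star_fun f z - g z * star_fun g z) holomorphic_on strip"
      using assms(1,2) by (intro holomorphic_intros holomorphic_on_star_fun_strip)
    show "f t * star_fun f t - g t * star_fun g t = 0" for t :: real
      using assms(3)[of t] by (simp add: complex_norm_square[symmetric])
  qed
  then show ?thesis
    by simp
qed

lemma zorder_star_fun_strip:
  assumes "f holomorphic_on strip" "w0 \<in> strip" "f w0 \<noteq> 0" "z \<in> strip"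
  shows "zorder (star_fun f) z = zorder f (cnj z)"
  using assms open_strip analytic_at
  by (intro zorder_star_fun holomorphic_frequently_nonzero[OF _ open_strip connected_strip]) auto

lemma zorder_mult_star_fun_strip:
  assumes "u holomorphic_on strip" "w0 \<in> strip" "u w0 \<noteq> 0"
    and "v holomorphic_on strip" "w1 \<in> strip" "v w1 \<noteq> 0" "z \<in> strip"
  shows "zorder (\<lambda>w. u w * star_fun v w) z = zorder u z + zorder v (cnj z)"
proof -
  have "zorder (\<lambda>w. u w * star_fun v w) z = zorder u z + zorder (star_fun v) z"
    by (rule zorder_mult_holomorphic[OF assms(1) holomorphic_on_star_fun_strip[OF assms(4)]
          open_strip connected_strip assms(2,3) _ _ assms(7), of "cnj w1"]) (use assms(5,6) in auto)
  then show ?thesis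
    using zorder_star_fun_strip[OF assms(4-7)] by simp
qed

lemma zorder_add_cnj_eq:
  assumes "f holomorphic_on strip" "w0 \<in> strip" "f w0 \<noteq> 0"
    and "g holomorphic_on strip" "w1 \<in> strip" "g w1 \<noteq> 0"
    and "\<And>z. z \<in> strip \<Longrightarrow> f z * star_fun f z = g z * star_fun g z" "z \<in> strip"
  shows "zorder f z + zorder f (cnj z) = zorder g z + zorder g (cnj z)"
proof -
  have "zorder (\<lambda>w. f w * star_fun f w) z = zorder (\<lambda>w. g w * star_fun g w) z"
    using eventually_at_in_open'[OF open_strip assms(8)] assms(7,8)
    by (intro zorder_cong) (auto elim: eventually_mono)
  then show ?thesis
    using zorder_mult_star_fun_strip[OF assms(1-3,1-3,8)] zorder_mult_star_fun_strip[OF assms(4-6,4-6,8)]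
    by simp
qed

lemma strip_zeros_below_zorder:
  assumes "f holomorphic_on strip" "w0 \<in> strip" "f w0 \<noteq> 0"
    and "\<And>z. z \<in> strip \<Longrightarrow> int (V z) \<le> zorder f z"
  obtains w where "w holomorphic_on strip" "\<And>z. z \<in> strip \<Longrightarrow> zorder w z = V z" "w w0 \<noteq> 0"
proof -
  have "{z\<in>K. 0 < V z} \<subseteq> {z\<in>K. f z = 0}" if "K \<subseteq> strip" for K
    using that assms(4) zorder_pos_iff[OF assms(1) open_strip _
        holomorphic_frequently_nonzero[OF assms(1) open_strip connected_strip assms(2,3)]]
    by fastforce
  then have "finite {z\<in>K. 0 < V z}" if "compact K" "K \<subseteq> strip" for K
    using holomorphic_finite_zeros_compact[OF assms(1) open_strip connected_strip assms(2,3) that]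
      that(2) finite_subset by blast
  then obtain w where w: "w holomorphic_on strip" "\<And>z. z \<in> strip \<Longrightarrow> zorder w z = V z"
    "\<And>z. z \<in> strip \<Longrightarrow> w z = 0 \<longleftrightarrow> 0 < V z"
    using strip_prescribed_zeros by blast
  have "zorder f w0 = 0"
    using assms(1,2) open_strip analytic_at by (intro zorder_eq_0I assms(3)) blast
  then have "V w0 = 0"
    using assms(4)[OF assms(2)] by simp
  then show ?thesis
    using that[OF w(1)] w(2,3) assms(2) by auto
qed

lemma strip_zorder_split:
  assumes f: "f holomorphic_on strip" "w0 \<in> strip" "f w0 \<noteq> 0"
    and split: "\<And>z. z \<in> strip \<Longrightarrow> zorder f z = int (M z + V z)"
  obtains u v where "u holomorphic_on strip" "v holomorphic_on strip"
    "\<And>z. z \<in> strip \<Longrightarrow> zorder u z = M z" "\<And>z. z \<in> strip \<Longrightarrow> zorder v z = V z"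
    "\<And>z. z \<in> strip \<Longrightarrow> f z = u z * v z"
proof -
  have "int (M z) \<le> zorder f z" "int (V z) \<le> zorder f z" if "z \<in> strip" for z
    using split[OF that] by simp_all
  then obtain w v where
    w: "w holomorphic_on strip" "\<And>z. z \<in> strip \<Longrightarrow> zorder w z = M z" "w w0 \<noteq> 0" and
    v: "v holomorphic_on strip" "\<And>z. z \<in> strip \<Longrightarrow> zorder v z = V z" "v w0 \<noteq> 0"
    using strip_zeros_below_zorder[OF f] by metis
  have wv: "(\<lambda>z. w z * v z) holomorphic_on strip"
    using w(1) v(1) by (intro holomorphic_intros)
  have "zorder (\<lambda>z. w z * v z) z = zorder f z" if "z \<in> strip" for z
    using zorder_mult_holomorphic[OF w(1) v(1) open_strip connected_strip f(2) w(3) f(2) v(3) that]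
      w(2) v(2) split that by simp
  moreover have "w w0 * v w0 \<noteq> 0"
    using w(3) v(3) by simp
  ultimately obtain h where h: "h holomorphic_on strip" "\<And>z. z \<in> strip \<Longrightarrow> h z \<noteq> 0"
    "\<And>z. z \<in> strip \<Longrightarrow> f z = h z * (w z * v z)"
    using zorder_eq_imp_nonzero_factor[OF wv f(1) open_strip connected_strip f(2) _ f(2,3)] by blast
  show ?thesis
  proof (rule that[of "\<lambda>z. h z * w z" v])
    show "(\<lambda>z. h z * w z) holomorphic_on strip"
      using h(1) w(1) by (intro holomorphic_intros)
    fix z assume z: "z \<in> strip"
    have "zorder h z = 0"
      using h(1,2) z open_strip analytic_at by (intro zorder_eq_0I) blast+
    then show "zorder (\<lambda>z. h z * w z) z = M z"
      using zorder_mult_holomorphic[OF h(1) w(1) open_strip connected_strip f(2) h(2)[OF f(2)] f(2) w(3) z]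
        w(2)[OF z] by simp
    show "f z = h z * w z * v z"
      using h(3)[OF z] by (simp add: mult.assoc)
  qed (use v in auto)
qed

lemma strip_common_factor:
  assumes f: "f holomorphic_on strip" "w0 \<in> strip" "f w0 \<noteq> 0"
    and g: "g holomorphic_on strip" "w1 \<in> strip" "g w1 \<noteq> 0"
    and balance: "\<And>z. z \<in> strip \<Longrightarrow>
        zorder f z + zorder f (cnj z) = zorder g z + zorder g (cnj z)"
  obtains u v k where "u holomorphic_on strip" "v holomorphic_on strip" "k holomorphic_on strip"
    "\<And>z. z \<in> strip \<Longrightarrow> k z \<noteq> 0" "\<And>z. z \<in> strip \<Longrightarrow> f z = u z * v z"
    "\<And>z. z \<in> strip \<Longrightarrow> g z = k z * (u z * star_fun v z)"
proof -
  have nonneg: "0 \<le> zorder f z" "0 \<le> zorder g z" if "z \<in> strip" for z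
    using f g that open_strip analytic_at
    by (intro zorder_ge_0 holomorphic_frequently_nonzero[OF _ open_strip connected_strip]; blast)+
  define M where "M z = nat (min (zorder f z) (zorder g z))" for z
  define V where "V z = nat (zorder f z) - M z" for z
  have "zorder f z = int (M z + V z)" if "z \<in> strip" for z
    using nonneg[OF that] by (simp add: M_def V_def)
  from strip_zorder_split[OF f this] obtain u v
    where uv: "u holomorphic_on strip" "v holomorphic_on strip"
    "\<And>z. z \<in> strip \<Longrightarrow> zorder u z = M z" "\<And>z. z \<in> strip \<Longrightarrow> zorder v z = V z"
    "\<And>z. z \<in> strip \<Longrightarrow> f z = u z * v z"
    by blast
  have uv_w0: "u w0 \<noteq> 0" "v w0 \<noteq> 0"
    using uv(5) f(2,3) by auto
  have uv_star_zorder: "zorder (\<lambda>z. u z * star_fun v z) z = zorder g z" if z: "z \<in> strip" for z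
  proof -
    have "cnj z \<in> strip"
      using z by simp
    \<comment> \<open>by the balance, ord f exceeds ord g at z exactly when it falls short of it at cnj z\<close>
    then have "M z + V (cnj z) = zorder g z"
      using balance[OF z] nonneg[OF z] nonneg[of "cnj z"] by (simp add: M_def V_def)
    then show ?thesis
      using zorder_mult_star_fun_strip[OF uv(1) f(2) uv_w0(1) uv(2) f(2) uv_w0(2) z]
        uv(3)[OF z] uv(4)[OF \<open>cnj z \<in> strip\<close>] by simp
  qed
  have uv_star: "(\<lambda>z. u z * star_fun v z) holomorphic_on strip"
    using uv(1,2) by (intro holomorphic_intros holomorphic_on_star_fun_strip)
  have "cnj w0 \<in> strip" "star_fun v (cnj w0) \<noteq> 0"
    using f(2) uv_w0 by simp_all
  then obtain w where w: "w \<in> strip" "u w * star_fun v w \<noteq> 0"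
    using holomorphic_mult_nonzero_somewhere[OF uv(1) holomorphic_on_star_fun_strip[OF uv(2)]
          open_strip connected_strip f(2) uv_w0(1)] by blast
  obtain k where "k holomorphic_on strip" "\<And>z. z \<in> strip \<Longrightarrow> k z \<noteq> 0"
    "\<And>z. z \<in> strip \<Longrightarrow> g z = k z * (u z * star_fun v z)"
    using zorder_eq_imp_nonzero_factor[OF uv_star g(1) open_strip connected_strip w g(2,3)
        uv_star_zorder] by blast
  with uv show ?thesis
    using that by blast
qed

lemma mult_star_fun_eq_1_of_norm_eq:
  assumes k: "k holomorphic_on strip" and f: "f holomorphic_on strip" "w0 \<in> strip" "f w0 \<noteq> 0"
    and fg: "\<And>z. z \<in> strip \<Longrightarrow> f z = u z * v z"
      "\<And>z. z \<in> strip \<Longrightarrow> g z = k z * (u z * star_fun v z)"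
    and moduli: "\<And>t. cmod (f (complex_of_real t)) = cmod (g (complex_of_real t))"
    and z: "z \<in> strip"
  shows "k z * star_fun k z = 1"
proof -
  have kk: "(\<lambda>z. k z * star_fun k z) holomorphic_on strip"
    using k by (intro holomorphic_intros holomorphic_on_star_fun_strip)
  have "(k z * star_fun k z - 1) * f z = 0" if "z \<in> strip" for z
  proof (rule holomorphic_strip_eq_0_of_real[OF _ _ that])
    show "(\<lambda>z. (k z * star_fun k z - 1) * f z) holomorphic_on strip"
      using k f(1) by (intro holomorphic_intros holomorphic_on_star_fun_strip)
    fix t :: real
    show "(k t * star_fun k t - 1) * f t = 0"
    proof (cases "f t = 0")
      case False
      then have "cmod (k t) = 1"
        using moduli[of t] fg[of t] by (simp add: norm_mult)
      then have "k t * star_fun k t = 1"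
        by (simp add: complex_norm_square[symmetric])
      then show ?thesis
        by simp
    qed simp
  qed
  then have on_nonzero: "k z * star_fun k z = 1" if "z \<in> strip \<inter> f -` (- {0})" for z
    using that by auto
  show ?thesis
  proof (rule analytic_continuation_open[OF _ open_strip _ connected_strip _ kk holomorphic_on_const
        on_nonzero z])
    show "open (strip \<inter> f -` (- {0}))"
      by (rule continuous_open_preimage[OF holomorphic_on_imp_continuous_on[OF f(1)] open_strip]) auto
    show "strip \<inter> f -` (- {0}) \<noteq> {}"
      using f(2,3) by auto
  qed blast
qed

lemma strip_unimodular_sqrt:
  assumes k: "k holomorphic_on strip" "\<And>z. z \<in> strip \<Longrightarrow> k z * star_fun k z = 1"
  obtains s where "s holomorphic_on strip" "\<And>z. z \<in> strip \<Longrightarrow> k z = s z ^ 2"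
    "\<And>z. z \<in> strip \<Longrightarrow> s z * star_fun s z = 1"
proof -
  have "k z \<noteq> 0" if "z \<in> strip" for z
    using k(2)[OF that] by auto
  then obtain s where s: "s holomorphic_on strip" "\<And>z. z \<in> strip \<Longrightarrow> k z = s z ^ 2"
    using contractible_imp_holomorphic_sqrt[OF k(1) convex_imp_contractible[OF convex_strip]]
    by blast
  define \<phi> where "\<phi> z = s z * star_fun s z" for z
  have "\<phi> z ^ 2 = 1" if "z \<in> strip" for z
    using k(2)[OF that] s(2)[OF that] s(2)[of "cnj z"] that
    by (simp add: \<phi>_def star_fun_def power_mult_distrib)
  then have "\<phi> ` strip \<subseteq> {1, -1}"
    by (auto simp: power2_eq_1_iff)
  moreover have "continuous_on strip \<phi>"
    unfolding \<phi>_def using s(1)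
    by (intro holomorphic_on_imp_continuous_on holomorphic_intros holomorphic_on_star_fun_strip)
  ultimately have "\<phi> constant_on strip"
    by (intro continuous_finite_range_constant[OF connected_strip]) (auto intro: finite_subset)
  moreover have "\<phi> 0 = 1"
  proof -
    have "\<phi> 0 = complex_of_real ((cmod (s 0))\<^sup>2)"
      unfolding \<phi>_def star_fun_def complex_cnj_zero complex_norm_square ..
    then have "Re (\<phi> 0) \<ge> 0"
      by simp
    moreover have "\<phi> 0 \<in> {1, -1}"
      using \<open>\<phi> ` strip \<subseteq> {1, -1}\<close> zero_in_strip by blast
    ultimately show ?thesis
      by auto
  qed
  ultimately have "s z * star_fun s z = 1" if "z \<in> strip" for z
    using that zero_in_strip by (auto simp: constant_on_def \<phi>_def)
  with s that show ?thesis
    by blast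
qed

lemma strip_factorization_of_equal_moduli:
  assumes f: "f holomorphic_on strip" and g: "g holomorphic_on strip"
    and moduli: "\<And>t. cmod (f (complex_of_real t)) = cmod (g (complex_of_real t))"
  shows "\<exists>u v. u holomorphic_on strip \<and> v holomorphic_on strip \<and>
           (\<forall>z\<in>strip. f z = u z * v z \<and> g z = u z * star_fun v z)"
proof (cases "\<exists>w0\<in>strip. f w0 \<noteq> 0")
  case False
  then have "g z = 0" if "z \<in> strip" for z
    using moduli by (intro holomorphic_strip_eq_0_of_real[OF g _ that]) simp
  with False show ?thesis
    by (intro exI[of _ "\<lambda>_. 0"]) auto
next
  case True
  then obtain w0 where w0: "w0 \<in> strip" "f w0 \<noteq> 0"
    by blast
  obtain w1 where w1: "w1 \<in> strip" "g w1 \<noteq> 0"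
    using holomorphic_strip_eq_0_of_real[OF f _ w0(1)] moduli w0(2) by force
  obtain u v k where uvk: "u holomorphic_on strip" "v holomorphic_on strip" "k holomorphic_on strip"
    "\<And>z. z \<in> strip \<Longrightarrow> f z = u z * v z"
    "\<And>z. z \<in> strip \<Longrightarrow> g z = k z * (u z * star_fun v z)"
    using strip_common_factor[OF f w0 g w1 zorder_add_cnj_eq[OF f w0 g w1]]
      mult_star_fun_eq_of_norm_eq[OF f g moduli] by metis
  obtain s where s: "s holomorphic_on strip" "\<And>z. z \<in> strip \<Longrightarrow> k z = s z ^ 2"
    "\<And>z. z \<in> strip \<Longrightarrow> s z * star_fun s z = 1"
    using strip_unimodular_sqrt[OF uvk(3) mult_star_fun_eq_1_of_norm_eq[OF uvk(3) f w0 uvk(4,5) moduli]]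
    by blast
  have s_nonzero: "s z \<noteq> 0" if "z \<in> strip" for z
    using s(3)[OF that] by auto
  show ?thesis
  proof (intro exI conjI ballI)
    show "(\<lambda>z. u z * s z) holomorphic_on strip" "(\<lambda>z. v z / s z) holomorphic_on strip"
      using uvk(1,2) s(1) s_nonzero by (auto intro!: holomorphic_intros)
    fix z assume z: "z \<in> strip"
    show "f z = u z * s z * (v z / s z)"
      using uvk(4)[OF z] s_nonzero[OF z] by simp
    have "star_fun s z = 1 / s z"
      using s(3)[OF z] s_nonzero[OF z] by (simp add: field_simps)
    then have "star_fun (\<lambda>z. v z / s z) z = star_fun v z * s z"
      by (simp add: star_fun_def)
    then show "g z = u z * s z * star_fun (\<lambda>z. v z / s z) z"
      using uvk(5)[OF z] s(2)[OF z] by (simp add: power2_eq_square)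
  qed
qed

lemma strip_equal_moduli_of_factorization:
  assumes "\<forall>z\<in>strip. f z = u z * v z \<and> g z = u z * star_fun v z"
  shows "cmod (f (complex_of_real t)) = cmod (g (complex_of_real t))"
  using assms of_real_in_strip[of t] by (simp add: norm_mult)

theorem corollary3p7:
  assumes "f \<in> H2_strip" and "g \<in> H2_strip"
  shows "(\<forall>t::real. cmod (f (complex_of_real t)) = cmod (g (complex_of_real t))) \<longleftrightarrow>
         (\<exists>u v. u holomorphic_on strip \<and> v holomorphic_on strip \<and>
            (\<forall>z\<in>strip. f z = u z * v z \<and> g z = u z * star_fun v z))"
proof -
  have "f holomorphic_on strip" "g holomorphic_on strip"
    using assms by (auto simp: H2_strip_def)
  then show ?thesis
    using strip_factorization_of_equal_moduli strip_equal_moduli_of_factorization by blast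
qed

end
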